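(* Let $\phi$ be the standard normal density, $\gamma(x)=\frac{1}{\pi(1+x^2)}$ the standard Cauchy density, $g=\phi*\gamma$, and for $\alpha\in(0,1)$ let $t(\alpha)>0$ be the posterior median threshold defined in the context. For $A\ge0$ and $n\ge 2$ let $t_A=\sqrt{2(1+A)\log n}$ and $\alpha_A=t^{-1}(t_A)$. Then there exist $N_0>0$ and $C>0$, both independent of $A$, such that for all $n\ge N_0$, \[ \alpha_A\le C(1+A)(\log n)\,n^{-1-A}. \]
   Context: For $\alpha\in[0,1]$, consider the single-coordinate posterior $(1-a(x))\delta_0+a(x)\gamma_x(u)\,du$ of $\theta$ given $x\sim\mathcal{N}(\theta,1)$ under the prior $(1-\alpha)\delta_0+\alpha\gamma(u)\,du$, where $a(x)=\frac{\alpha g(x)}{(1-\alpha)\phi(x)+\alpha g(x)}$ and $\gamma_x(u)=\phi(x-u)\gamma(u)/g(x)$. Its median is $0$ if and only if $|x|\le t(\alpha)$, which defines $t(\alpha)$; the map $\alpha\mapsto t(\alpha)$ is continuous and strictly decreasing, so $t^{-1}$ exists. *)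

theory Defs
  imports "HOL-Analysis.Analysis"
begin

definition std_normal :: "real \<Rightarrow> real" where
  "std_normal x = exp (- (x\<^sup>2) / 2) / sqrt (2 * pi)"

definition cauchy :: "real \<Rightarrow> real" where
  "cauchy u = 1 / (pi * (1 + u\<^sup>2))"

definition gconv :: "real \<Rightarrow> real" where
  "gconv x = (LINT u|lborel. std_normal (x - u) * cauchy u)"

definition post_a :: "real \<Rightarrow> real \<Rightarrow> real" where
  "post_a \<alpha> x = \<alpha> * gconv x / ((1 - \<alpha>) * std_normal x + \<alpha> * gconv x)"

definition post_dens :: "real \<Rightarrow> real \<Rightarrow> real" where
  "post_dens x u = std_normal (x - u) * cauchy u / gconv x"

definition post_neg :: "real \<Rightarrow> real \<Rightarrow> real" where
  "post_neg \<alpha> x = post_a \<alpha> x * (LINT u:{..<0}|lborel. post_dens x u)"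

definition post_pos :: "real \<Rightarrow> real \<Rightarrow> real" where
  "post_pos \<alpha> x = post_a \<alpha> x * (LINT u:{0<..}|lborel. post_dens x u)"

definition median_zero :: "real \<Rightarrow> real \<Rightarrow> bool" where
  "median_zero \<alpha> x \<longleftrightarrow> post_neg \<alpha> x \<le> 1/2 \<and> post_pos \<alpha> x \<le> 1/2"

text \<open>Threshold t(alpha): median is 0 iff |x| <= t(alpha).\<close>
definition thr :: "real \<Rightarrow> real" where
  "thr \<alpha> = Sup {\<bar>x\<bar> | x. median_zero \<alpha> x}"

end

theory Submission
  imports Defs "HOL-Probability.Probability"
begin

text \<open>
  If \<open>thr \<alpha> = t\<close>, then some \<open>x\<close> with \<open>\<bar>x\<bar>\<close> just below \<open>t\<close> still has posterior median \<open>0\<close>.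
  For \<open>x > 0\<close> this says that the slab mass on \<open>(0,\<infinity>)\<close>, which is at least a constant times
  \<open>\<gamma>(\<bar>x\<bar> + 1)\<close>, is at most \<open>\<phi>(x)\<close> plus the slab mass on \<open>(-\<infinity>,0]\<close>, itself \<open>O(exp(-x\<^sup>2/2))\<close>;
  hence \<open>\<alpha> = O(x\<^sup>2 exp(-x\<^sup>2/2))\<close>. With \<open>t\<^sup>2 = 2(1+A) log n\<close> one has \<open>exp(-t\<^sup>2/2) = n powr (-1-A)\<close>.
\<close>

definition slab_joint :: "real \<Rightarrow> real \<Rightarrow> real" where
  "slab_joint x u = std_normal (x - u) * cauchy u"

lemma std_normal_diff_eq_normal_density: "std_normal (x - u) = normal_density x 1 u"
  unfolding std_normal_def normal_density_def by (simp add: power2_commute)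

lemma std_normal_pos: "std_normal x > 0"
  unfolding std_normal_def by simp

lemma cauchy_pos: "cauchy x > 0"
  unfolding cauchy_def by (simp add: add_pos_nonneg)

lemma cauchy_le_inverse_pi: "cauchy x \<le> 1 / pi"
  unfolding cauchy_def by (simp add: divide_simps add_pos_nonneg)

lemma slab_joint_nonneg: "slab_joint x u \<ge> 0"
  unfolding slab_joint_def using std_normal_pos cauchy_pos by (simp add: less_imp_le)

lemma slab_joint_measurable [measurable]: "slab_joint x \<in> borel_measurable borel"
  unfolding slab_joint_def std_normal_def cauchy_def by measurable

lemma integrable_slab_joint: "integrable lborel (slab_joint x)"
proof (rule Bochner_Integration.integrable_bound[of _ "\<lambda>u. normal_density x 1 u / pi"])
  show "integrable lborel (\<lambda>u. normal_density x 1 u / pi)" by simp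
  show "AE u in lborel. norm (slab_joint x u) \<le> norm (normal_density x 1 u / pi)"
  proof (rule AE_I2)
    fix u
    have "slab_joint x u \<le> normal_density x 1 u * (1 / pi)"
      unfolding slab_joint_def std_normal_diff_eq_normal_density[symmetric]
      using cauchy_le_inverse_pi std_normal_pos by (intro mult_left_mono) (auto simp: less_imp_le)
    then show "norm (slab_joint x u) \<le> norm (normal_density x 1 u / pi)"
      using slab_joint_nonneg[of x u] by simp
  qed
qed simp

lemma set_integrable_slab_joint: "S \<in> sets borel \<Longrightarrow> set_integrable lborel S (slab_joint x)"
  unfolding set_integrable_def by (rule integrable_mult_indicator) (auto simp: integrable_slab_joint)

lemma set_integral_slab_joint_nonneg: "0 \<le> (LINT u:S|lborel. slab_joint x u)"
  unfolding set_lebesgue_integral_def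
  by (rule Bochner_Integration.integral_nonneg) (auto simp: slab_joint_nonneg)

lemma set_integral_slab_joint_mono:
  assumes "A \<subseteq> B" "A \<in> sets borel" "B \<in> sets borel"
  shows "(LINT u:A|lborel. slab_joint x u) \<le> (LINT u:B|lborel. slab_joint x u)"
  unfolding set_lebesgue_integral_def
proof (rule integral_mono)
  show "integrable lborel (\<lambda>u. indicator A u *\<^sub>R slab_joint x u)"
    using set_integrable_slab_joint[OF assms(2)] unfolding set_integrable_def .
  show "integrable lborel (\<lambda>u. indicator B u *\<^sub>R slab_joint x u)"
    using set_integrable_slab_joint[OF assms(3)] unfolding set_integrable_def .
  show "indicator A u *\<^sub>R slab_joint x u \<le> indicator B u *\<^sub>R slab_joint x u" for u
    using assms(1) slab_joint_nonneg[of x u] by (auto split: split_indicator)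
qed

lemma gconv_eq_set_integral_split:
  assumes "A \<in> sets borel" "B \<in> sets borel" "A \<inter> B = {}" "A \<union> B = UNIV"
  shows "gconv x = (LINT u:A|lborel. slab_joint x u) + (LINT u:B|lborel. slab_joint x u)"
proof -
  have "gconv x = (LINT u:A \<union> B|lborel. slab_joint x u)"
    unfolding gconv_def slab_joint_def set_lebesgue_integral_def using assms(4) by simp
  also have "\<dots> = (LINT u:A|lborel. slab_joint x u) + (LINT u:B|lborel. slab_joint x u)"
    by (rule set_integral_Un) (use assms set_integrable_slab_joint in auto)
  finally show ?thesis .
qed

lemma set_integral_slab_joint_lower:
  assumes S: "S \<in> sets borel" "{a..a+1} \<subseteq> S"
    and near: "\<And>u. u \<in> {a..a+1} \<Longrightarrow> \<bar>x - u\<bar> \<le> 1 \<and> \<bar>u\<bar> \<le> \<bar>x\<bar> + 1"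
  shows "std_normal 1 * cauchy (\<bar>x\<bar> + 1) \<le> (LINT u:S|lborel. slab_joint x u)"
proof -
  have "std_normal 1 * cauchy (\<bar>x\<bar> + 1)
      = (LINT u:{a..a+1}|lborel. std_normal 1 * cauchy (\<bar>x\<bar> + 1))"
    by (subst set_integral_const) auto
  also have "\<dots> \<le> (LINT u:{a..a+1}|lborel. slab_joint x u)"
  proof (rule set_integral_mono)
    show "set_integrable lborel {a..a + 1} (\<lambda>u. std_normal 1 * cauchy (\<bar>x\<bar> + 1))"
      by (simp add: set_integrable_def)
    show "set_integrable lborel {a..a + 1} (slab_joint x)"
      by (rule set_integrable_slab_joint) simp
    fix u assume "u \<in> {a..a+1}"
    with near have "\<bar>x - u\<bar> \<le> \<bar>1\<bar>" and "\<bar>u\<bar> \<le> \<bar>\<bar>x\<bar> + 1\<bar>" by auto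
    then have "(x - u)\<^sup>2 \<le> 1\<^sup>2" and "u\<^sup>2 \<le> (\<bar>x\<bar> + 1)\<^sup>2"
      by (simp_all only: abs_le_square_iff)
    then have "std_normal 1 \<le> std_normal (x - u)" and "cauchy (\<bar>x\<bar> + 1) \<le> cauchy u"
      unfolding std_normal_def cauchy_def
      by (auto intro!: divide_right_mono divide_left_mono mult_pos_pos add_pos_nonneg)
    then show "std_normal 1 * cauchy (\<bar>x\<bar> + 1) \<le> slab_joint x u"
      unfolding slab_joint_def using std_normal_pos cauchy_pos
      by (intro mult_mono) (auto simp: less_imp_le)
  qed
  also have "\<dots> \<le> (LINT u:S|lborel. slab_joint x u)"
    by (rule set_integral_slab_joint_mono) (use S in auto)
  finally show ?thesis .
qed

text \<open>On the side opposite to \<open>x\<close> we have \<open>(x - u)\<^sup>2 \<ge> x\<^sup>2 + u\<^sup>2\<close>, so \<open>\<phi>(x - u) \<le> exp(-x\<^sup>2/2) \<phi>(u)\<close>.\<close>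

lemma set_integral_slab_joint_opposite_upper:
  assumes S: "S \<in> sets borel" and opposite: "\<And>u. u \<in> S \<Longrightarrow> x * u \<le> 0"
  shows "(LINT u:S|lborel. slab_joint x u) \<le> exp (- x\<^sup>2 / 2) / pi"
proof -
  have "(LINT u:S|lborel. slab_joint x u)
      \<le> (\<integral>u. exp (- x\<^sup>2 / 2) / pi * normal_density 0 1 u \<partial>lborel)"
    unfolding set_lebesgue_integral_def
  proof (rule integral_mono)
    show "integrable lborel (\<lambda>u. indicator S u *\<^sub>R slab_joint x u)"
      using set_integrable_slab_joint[OF S] unfolding set_integrable_def .
    show "integrable lborel (\<lambda>u. exp (- x\<^sup>2 / 2) / pi * normal_density 0 1 u)" by simp
    fix u
    show "indicator S u *\<^sub>R slab_joint x u \<le> exp (- x\<^sup>2 / 2) / pi * normal_density 0 1 u"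
    proof (cases "u \<in> S")
      case True
      have "x\<^sup>2 + u\<^sup>2 \<le> (x - u)\<^sup>2"
        using opposite[OF True] by (simp add: power2_diff mult.commute)
      then have "exp (- (x - u)\<^sup>2 / 2) \<le> exp (- x\<^sup>2 / 2) * exp (- u\<^sup>2 / 2)"
        by (simp add: exp_add[symmetric])
      then have "std_normal (x - u) \<le> exp (- x\<^sup>2 / 2) * normal_density 0 1 u"
        unfolding std_normal_def std_normal_density_def by (simp add: divide_right_mono)
      then have "slab_joint x u \<le> exp (- x\<^sup>2 / 2) * normal_density 0 1 u * (1 / pi)"
        unfolding slab_joint_def using cauchy_le_inverse_pi[of u] cauchy_pos[of u]
        by (intro mult_mono) (auto simp: less_imp_le)
      then show ?thesis using True by simp
    qed simp
  qed
  also have "\<dots> = exp (- x\<^sup>2 / 2) / pi" by simp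
  finally show ?thesis .
qed

lemma set_integral_slab_joint_reflect:
  "(LINT u:{0<..}|lborel. slab_joint x u) = (LINT u:{..<0}|lborel. slab_joint (- x) u)"
proof -
  have "(LINT u:{..<0}|lborel. slab_joint (- x) u)
      = \<bar>-1\<bar> *\<^sub>R (\<integral>u. indicator {..<0} (0 + (-1) * u) *\<^sub>R slab_joint (- x) (0 + (-1) * u) \<partial>lborel)"
    unfolding set_lebesgue_integral_def by (rule lborel_integral_real_affine) simp
  also have "\<dots> = (LINT u:{0<..}|lborel. slab_joint x u)"
    unfolding set_lebesgue_integral_def slab_joint_def std_normal_def cauchy_def
    by (auto intro!: Bochner_Integration.integral_cong split: split_indicator
        simp: power2_commute)
  finally show ?thesis by simp
qed

lemma gconv_pos: "gconv x > 0"
proof -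
  have "std_normal 1 * cauchy (\<bar>x\<bar> + 1) \<le> (LINT u:UNIV|lborel. slab_joint x u)"
    by (rule set_integral_slab_joint_lower[of _ x]) auto
  moreover have "std_normal 1 * cauchy (\<bar>x\<bar> + 1) > 0"
    using std_normal_pos cauchy_pos by simp
  ultimately show ?thesis
    unfolding gconv_def slab_joint_def set_lebesgue_integral_def by simp
qed

lemma post_pos_eq:
  "post_pos \<alpha> x = \<alpha> * (LINT u:{0<..}|lborel. slab_joint x u) / ((1 - \<alpha>) * std_normal x + \<alpha> * gconv x)"
  unfolding post_pos_def post_a_def post_dens_def slab_joint_def using gconv_pos[of x] by simp

lemma post_neg_eq:
  "post_neg \<alpha> x = \<alpha> * (LINT u:{..<0}|lborel. slab_joint x u) / ((1 - \<alpha>) * std_normal x + \<alpha> * gconv x)"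
  unfolding post_neg_def post_a_def post_dens_def slab_joint_def using gconv_pos[of x] by simp

lemma median_zero_at_zero:
  assumes "0 < \<alpha>" "\<alpha> < 1"
  shows "median_zero \<alpha> 0"
proof -
  define P where "P = (LINT u:{0<..}|lborel. slab_joint 0 u)"
  have neg: "(LINT u:{..<0}|lborel. slab_joint 0 u) = P"
    unfolding P_def using set_integral_slab_joint_reflect[of 0] by simp
  have "gconv 0 = P + (LINT u:{..0}|lborel. slab_joint 0 u)"
    unfolding P_def by (rule gconv_eq_set_integral_split) auto
  moreover have "(LINT u:{..<0}|lborel. slab_joint 0 u) \<le> (LINT u:{..0}|lborel. slab_joint 0 u)"
    by (rule set_integral_slab_joint_mono) auto
  ultimately have "\<alpha> * (2 * P) \<le> \<alpha> * gconv 0"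
    using neg assms by (intro mult_left_mono) auto
  moreover have "0 < (1 - \<alpha>) * std_normal 0" "0 < \<alpha> * gconv 0"
    using assms std_normal_pos[of 0] gconv_pos[of 0] by simp_all
  ultimately have "\<alpha> * P / ((1 - \<alpha>) * std_normal 0 + \<alpha> * gconv 0) \<le> 1 / 2"
    by (simp add: divide_simps)
  then show ?thesis
    unfolding median_zero_def post_pos_eq post_neg_eq neg P_def[symmetric] by simp
qed

lemma mass_le_of_posterior_half:
  fixes \<alpha> \<phi> P Q :: real
  assumes "0 < \<alpha>" "\<alpha> < 1" "\<phi> > 0" "0 \<le> P" "0 \<le> Q"
    and half: "\<alpha> * P / ((1 - \<alpha>) * \<phi> + \<alpha> * (P + Q)) \<le> 1 / 2"
  shows "\<alpha> * P \<le> \<phi> + Q"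
proof -
  have "0 < (1 - \<alpha>) * \<phi> + \<alpha> * (P + Q)"
    using assms by (intro add_pos_nonneg) auto
  with half have "\<alpha> * P \<le> (1 - \<alpha>) * \<phi> + \<alpha> * Q"
    by (simp add: divide_simps algebra_simps)
  also have "\<dots> \<le> \<phi> + Q"
    by (intro add_mono mult_left_le_one_le) (use assms in auto)
  finally show ?thesis .
qed

lemma alpha_mass_le_of_posterior_half:
  assumes "0 < \<alpha>" "\<alpha> < 1"
    and sets: "S \<in> sets borel" "T \<in> sets borel" "S \<inter> T = {}" "S \<union> T = UNIV"
    and half: "\<alpha> * (LINT u:S|lborel. slab_joint x u)
                 / ((1 - \<alpha>) * std_normal x + \<alpha> * gconv x) \<le> 1 / 2"
    and lower: "L \<le> (LINT u:S|lborel. slab_joint x u)"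
    and upper: "(LINT u:T|lborel. slab_joint x u) \<le> E"
  shows "\<alpha> * L \<le> std_normal x + E"
proof -
  have "\<alpha> * (LINT u:S|lborel. slab_joint x u) \<le> std_normal x + (LINT u:T|lborel. slab_joint x u)"
    using half unfolding gconv_eq_set_integral_split[OF sets]
    by (intro mass_le_of_posterior_half)
      (use assms std_normal_pos set_integral_slab_joint_nonneg in auto)
  moreover have "\<alpha> * L \<le> \<alpha> * (LINT u:S|lborel. slab_joint x u)"
    using lower assms by simp
  ultimately show ?thesis using upper by linarith
qed

lemma median_zero_imp_alpha_mass_le:
  assumes "median_zero \<alpha> x" "x \<noteq> 0" "0 < \<alpha>" "\<alpha> < 1"
  shows "\<alpha> * (std_normal 1 * cauchy (\<bar>x\<bar> + 1)) \<le> std_normal x + exp (- x\<^sup>2 / 2) / pi"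
proof -
  let ?L = "std_normal 1 * cauchy (\<bar>x\<bar> + 1)" and ?E = "exp (- x\<^sup>2 / 2) / pi"
  note side = alpha_mass_le_of_posterior_half[OF assms(3,4), of _ _ x ?L ?E]
  consider "x > 0" | "x < 0" using assms(2) by linarith
  then show ?thesis
  proof cases
    case 1
    show ?thesis
    proof (rule side[of "{0<..}" "{..0}"])
      show "\<alpha> * (LINT u:{0<..}|lborel. slab_joint x u)
              / ((1 - \<alpha>) * std_normal x + \<alpha> * gconv x) \<le> 1 / 2"
        using assms(1) unfolding median_zero_def post_pos_eq by simp
      show "?L \<le> (LINT u:{0<..}|lborel. slab_joint x u)"
        by (rule set_integral_slab_joint_lower[of _ x]) (use 1 in auto)
      show "(LINT u:{..0}|lborel. slab_joint x u) \<le> ?E"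
        by (rule set_integral_slab_joint_opposite_upper) (use 1 in \<open>auto simp: mult_nonneg_nonpos\<close>)
    qed auto
  next
    case 2
    show ?thesis
    proof (rule side[of "{..<0}" "{0..}"])
      show "\<alpha> * (LINT u:{..<0}|lborel. slab_joint x u)
              / ((1 - \<alpha>) * std_normal x + \<alpha> * gconv x) \<le> 1 / 2"
        using assms(1) unfolding median_zero_def post_neg_eq by simp
      show "?L \<le> (LINT u:{..<0}|lborel. slab_joint x u)"
        by (rule set_integral_slab_joint_lower[of _ "x - 1"]) (use 2 in auto)
      show "(LINT u:{0..}|lborel. slab_joint x u) \<le> ?E"
        by (rule set_integral_slab_joint_opposite_upper) (use 2 in \<open>auto simp: mult_nonpos_nonneg\<close>)
    qed auto
  qed
qed

definition tail_bound :: "real \<Rightarrow> real" where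
  "tail_bound y = exp (- y\<^sup>2 / 2) * (1 + (y + 1)\<^sup>2)"

definition median_const :: real where
  "median_const = (pi + sqrt (2 * pi)) * exp (1 / 2)"

lemma median_const_pos: "median_const > 0"
  unfolding median_const_def by (simp add: add_pos_nonneg)

lemma median_zero_imp_alpha_le:
  assumes "median_zero \<alpha> x" "x \<noteq> 0" "0 < \<alpha>" "\<alpha> < 1"
  shows "\<alpha> \<le> median_const * tail_bound \<bar>x\<bar>"
proof -
  have "std_normal 1 * cauchy (\<bar>x\<bar> + 1) > 0"
    using std_normal_pos cauchy_pos by simp
  then have "\<alpha> \<le> (std_normal x + exp (- x\<^sup>2 / 2) / pi) / (std_normal 1 * cauchy (\<bar>x\<bar> + 1))"
    using median_zero_imp_alpha_mass_le[OF assms] by (simp add: pos_le_divide_eq)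
  also have "\<dots> = median_const * tail_bound \<bar>x\<bar>"
  proof -
    have collect: "(a / q + a / p) / ((1 / c) / q * (1 / (p * r))) = (p + q) * c * (a * r)"
      if "q > 0" "p > 0" "c > 0" "r > 0" for a q p c r :: real
      using that by (simp add: field_simps)
    have exp_half: "exp (- (1\<^sup>2) / 2) = 1 / exp (1 / 2 :: real)"
      by (simp add: exp_minus inverse_eq_divide)
    show ?thesis
      unfolding std_normal_def cauchy_def exp_half median_const_def tail_bound_def power2_abs
      by (subst collect) (auto simp: add_pos_nonneg)
  qed
  finally show ?thesis .
qed

text \<open>Write \<open>y = s + d\<close>: then \<open>exp(-y\<^sup>2/2) \<le> exp(-s\<^sup>2/2) exp(-2d)\<close> and \<open>y + 1 \<le> (s + 1)(1 + d)\<close>,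
  and \<open>(1 + d)\<^sup>2 \<le> exp(2d)\<close>.\<close>

lemma tail_bound_antimono:
  fixes s y :: real
  assumes "2 \<le> s" "s \<le> y"
  shows "tail_bound y \<le> tail_bound s"
proof -
  define d where "d = y - s"
  have d: "d \<ge> 0" "y = s + d" using assms by (auto simp: d_def)
  have "y\<^sup>2 = s\<^sup>2 + 2 * s * d + d\<^sup>2"
    using d by (simp add: power2_sum)
  moreover have "2 * 2 * d \<le> 2 * s * d"
    using d assms by (intro mult_right_mono) auto
  ultimately have "s\<^sup>2 + 4 * d \<le> y\<^sup>2"
    using zero_le_power2[of d] by linarith
  then have gauss: "exp (- y\<^sup>2 / 2) \<le> exp (- s\<^sup>2 / 2) * exp (- 2 * d)"
    by (simp add: exp_add[symmetric])
  have "y + 1 \<le> (s + 1) * (1 + d)"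
    using d assms by (simp add: algebra_simps)
  then have "(y + 1)\<^sup>2 \<le> ((s + 1) * (1 + d))\<^sup>2"
    using d assms by (intro power_mono) auto
  then have "(y + 1)\<^sup>2 \<le> (s + 1)\<^sup>2 * (1 + d)\<^sup>2"
    by (simp only: power_mult_distrib)
  moreover have "1 \<le> (1 + d)\<^sup>2" using d by simp
  ultimately have poly: "1 + (y + 1)\<^sup>2 \<le> (1 + (s + 1)\<^sup>2) * (1 + d)\<^sup>2"
    by (simp add: algebra_simps)
  have "(1 + d)\<^sup>2 \<le> (exp d)\<^sup>2"
    using d exp_ge_add_one_self[of d] by (intro power_mono) auto
  also have "\<dots> = exp (2 * d)"
    by (simp add: power2_eq_square exp_add[symmetric])
  finally have compensate: "(1 + d)\<^sup>2 * exp (- 2 * d) \<le> 1"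
    by (simp add: exp_minus field_simps)
  have "tail_bound y \<le> (exp (- s\<^sup>2 / 2) * exp (- 2 * d)) * ((1 + (s + 1)\<^sup>2) * (1 + d)\<^sup>2)"
    unfolding tail_bound_def using gauss poly by (intro mult_mono) (auto simp: add_pos_nonneg)
  also have "\<dots> = tail_bound s * ((1 + d)\<^sup>2 * exp (- 2 * d))"
    unfolding tail_bound_def by simp
  also have "\<dots> \<le> tail_bound s"
    using compensate mult_left_mono[OF compensate, of "tail_bound s"]
    unfolding tail_bound_def by (simp add: add_pos_nonneg)
  finally show ?thesis .
qed

lemma median_zero_beyond_of_less_thr:
  assumes "0 < \<alpha>" "\<alpha> < 1" "s < thr \<alpha>"
  obtains x where "median_zero \<alpha> x" "s < \<bar>x\<bar>"
proof (rule ccontr)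
  assume "\<not> thesis"
  with that have "\<bar>x\<bar> \<le> s" if "median_zero \<alpha> x" for x
    using not_less \<open>median_zero \<alpha> x\<close> by blast
  then have "thr \<alpha> \<le> s"
    unfolding thr_def by (intro cSup_least) (use median_zero_at_zero[OF assms(1,2)] in auto)
  with assms(3) show False by simp
qed

text \<open>The median condition is used at some \<open>\<bar>x\<bar> > s = \<surd>(t\<^sup>2 - 2)\<close>, which costs the factor
  \<open>exp((t\<^sup>2 - s\<^sup>2)/2) = e\<close>.\<close>

lemma alpha_le_of_thr:
  assumes "0 < \<alpha>" "\<alpha> < 1" "thr \<alpha> = t" "0 \<le> t" "6 \<le> t\<^sup>2"
  shows "\<alpha> \<le> 3 * median_const * exp 1 * t\<^sup>2 * exp (- t\<^sup>2 / 2)"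
proof -
  define s where "s = sqrt (t\<^sup>2 - 2)"
  have s2: "s\<^sup>2 = t\<^sup>2 - 2" and s_ge: "2 \<le> s"
    unfolding s_def using assms(5) by (simp_all add: real_le_rsqrt)
  have "s < t"
    by (rule power_less_imp_less_base[of _ 2]) (use s2 assms(4) in auto)
  with assms(3) obtain x where x: "median_zero \<alpha> x" "s < \<bar>x\<bar>"
    using median_zero_beyond_of_less_thr[OF assms(1,2)] by blast
  have "2 \<le> t"
    by (rule power2_le_imp_le) (use assms(4,5) in auto)
  then have "2 * t \<le> t * t"
    by (intro mult_right_mono) auto
  with \<open>2 \<le> t\<close> have "t + 1 \<le> t\<^sup>2"
    unfolding power2_eq_square by linarith
  moreover have "(s + 1)\<^sup>2 \<le> (t + 1)\<^sup>2"
    using \<open>s < t\<close> s_ge by (intro power_mono) auto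
  ultimately have poly: "1 + (s + 1)\<^sup>2 \<le> 3 * t\<^sup>2"
    by (simp add: power2_sum)
  have "\<alpha> \<le> median_const * tail_bound \<bar>x\<bar>"
    using x s_ge assms by (intro median_zero_imp_alpha_le) auto
  also have "\<dots> \<le> median_const * tail_bound s"
    using tail_bound_antimono[OF s_ge] x median_const_pos by (intro mult_left_mono) auto
  also have "\<dots> = median_const * exp 1 * exp (- t\<^sup>2 / 2) * (1 + (s + 1)\<^sup>2)"
    unfolding tail_bound_def s2 by (simp add: exp_add[symmetric] field_simps)
  also have "\<dots> \<le> median_const * exp 1 * exp (- t\<^sup>2 / 2) * (3 * t\<^sup>2)"
    using poly median_const_pos by (intro mult_left_mono) auto
  finally show ?thesis by (simp add: algebra_simps)
qed
lemma alpha_le_of_thr_eq_sqrt_log: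
  fixes A :: real and n :: nat
  assumes "0 \<le> A" "exp 3 \<le> real n" "0 < \<alpha>" "\<alpha> < 1"
    and thr: "thr \<alpha> = sqrt (2 * (1 + A) * ln (real n))"
  shows "\<alpha> \<le> 6 * median_const * exp 1 * (1 + A) * ln (real n) * real n powr (- 1 - A)"
proof -
  define t where "t = sqrt (2 * (1 + A) * ln (real n))"
  have n_pos: "0 < real n"
    using assms(2) exp_gt_zero[of 3] by linarith
  then have ln_n: "3 \<le> ln (real n)"
    using assms(2) by (simp add: ln_ge_iff)
  then have t2: "t\<^sup>2 = 2 * (1 + A) * ln (real n)" and "6 \<le> t\<^sup>2"
    unfolding t_def using assms(1) mult_mono[of 2 "2 * (1 + A)" 3 "ln (real n)"] by auto
  have "exp (- t\<^sup>2 / 2) = real n powr (- 1 - A)"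
    unfolding t2 powr_def using n_pos by (simp add: field_simps)
  moreover have "\<alpha> \<le> 3 * median_const * exp 1 * t\<^sup>2 * exp (- t\<^sup>2 / 2)"
    by (rule alpha_le_of_thr) (use assms ln_n \<open>6 \<le> t\<^sup>2\<close> in \<open>simp_all add: t_def\<close>)
  ultimately show ?thesis
    unfolding t2 by (simp add: algebra_simps)
qed

theorem lemma12:
  shows "\<exists>N0 > 0. \<exists>C > 0. \<forall>A \<ge> (0::real). \<forall>n::nat. n \<ge> 2 \<longrightarrow> real n \<ge> N0 \<longrightarrow>
           (\<forall>\<alpha>. 0 < \<alpha> \<and> \<alpha> < 1 \<and> thr \<alpha> = sqrt (2 * (1 + A) * ln (real n)) \<longrightarrow>
              \<alpha> \<le> C * (1 + A) * ln (real n) * real n powr (- 1 - A))"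
proof -
  show ?thesis
    using alpha_le_of_thr_eq_sqrt_log median_const_pos
    by (intro exI[of _ "exp 3"] exI[of _ "6 * median_const * exp 1"] conjI) auto
qed

end
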